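(* In the setting of the augmented system $\Sigma_A$ and its integral augmentation $\Sigma_I$ below, suppose there exists $\sigma\in\mathbb{N}^m$ such that $L_{g_A}L_{f_A}^{i-1}h_k(t,x_A)=0$ for all $(t,x_A)$, all $1\le k\le m$ and all $1\le i\le\sigma_k-1$, and $L_{g_A}L_{f_A}^{\sigma_k-1}h_k(t_0,x_A(t_0))\ne0$ for all $k$. Then $L_{g_I}L_{f_I}^{i-1}h_k(t,x_I)=0$ for all $(t,x_I)$, all $1\le k\le m$ and all $1\le i\le\sigma_k$, and $L_{g_I}L_{f_I}^{\sigma_k}h_k(t_0,x_I(t_0))\ne0$ for all $1\le k\le m$. Moreover, the matrix $\Gamma_{g_I}(t,x_I)\in\mathbb{R}^{m\times m}$ whose $k$-th row is $L_{g_I}L_{f_I}^{\sigma_k}h_k(t,x_I)$ does not have full column rank at any point where $z_i=0$ for some $i\in\{1,\dots,r\}$.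
   Context: Setting: $f,g,h,\phi$ smooth, $r=m$, $\phi$ has relative degree $\rho$ with respect to $(f,g)$ ($L_gL_f^i\phi_k\equiv0$ for $i\le\rho_k-2$, $L_gL_f^{\rho_k-1}\phi_k\ne0$ everywhere), $\Omega_g$ (with $k$-th row $L_gL_f^{\rho_k-1}\phi_k$) invertible everywhere. Time-varying Lie derivatives for vector field $F$, input matrix $G$: $L_F^0\psi=\psi$, $L_F^j\psi=\frac{\partial L_F^{j-1}\psi}{\partial(\text{state})}F+\frac{\partial L_F^{j-1}\psi}{\partial t}$, $L_GL_F^j\psi=\frac{\partial L_F^j\psi}{\partial(\text{state})}G$. $S_{k,i-1}=\tfrac12\sum_{j=1}^{i-1}\binom{i}{j}z_k^{(i-j)}z_k^{(j)}$; $\Omega_f$ has $k$-th entry $S_{k,\rho_k-1}+L_f^{\rho_k}\phi_k$; $D(z)=\mathrm{diag}(z_1,\dots,z_r)$. Augmented system $\Sigma_A$ on $x_A=(x,\tilde z)$, $\tilde z=(z_k^{(j)})_{k\le r,\,0\le j\le\rho_k-1}$, dimension $n_A=n+\sum_k\rho_k$: $\dot x_A=f_A+g_Aw$ with $x$-block of $f_A$ equal to $f-g\Omega_g^{-1}\Omega_f$, $z_k$-block $(z_k^{(1)},\dots,z_k^{(\rho_k-1)},0)$; $x$-block of $g_A$ equal to $-g\Omega_g^{-1}D(z)$, $z_k$-block zero except last row $e_k^\top$. Output $h_A(t,x_A)=h(t,x)$. Integral augmentation $\Sigma_I$ with parameter $\beta>0$: state $x_I=(x_A,\xi)\in\mathbb{R}^{n_A+m}$,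 $\dot x_I=f_I(t,x_I)+g_I(t,x_I)\tilde w$, $f_I=\big(f_A(t,x_A)+g_A(t,x_A)s_\beta(\xi),\,0_{m\times1}\big)$, $g_I=\begin{bmatrix}0_{n_A\times m}\\ I_m\end{bmatrix}$, output $h(t,x)$; $s_\beta$ acts componentwise, $s_{\beta,i}(\xi)=2\beta\big(\frac{1}{e^{-\xi_i}+1}-\tfrac12\big)$. $x_A(t_0)$ and $x_I(t_0)=(x_A(t_0),\xi(t_0))$ are fixed initial states. *)

theory Defs
  imports "HOL-Analysis.Analysis"
begin

text \<open>In finite dimensions this is exactly C-infinity.\<close>

coinductive smooth :: "('a::real_normed_vector \<Rightarrow> 'b::real_normed_vector) \<Rightarrow> bool" where
  "(\<forall>x. F differentiable (at x)) \<Longrightarrow>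
   (\<forall>v. smooth (\<lambda>x. frechet_derivative F (at x) v)) \<Longrightarrow> smooth F"

definition lie :: "(real \<Rightarrow> 'a::euclidean_space \<Rightarrow> 'a) \<Rightarrow> (real \<Rightarrow> 'a \<Rightarrow> real) \<Rightarrow> real \<Rightarrow> 'a \<Rightarrow> real"
  where "lie F \<psi> t x = frechet_derivative (\<psi> t) (at x) (F t x) + deriv (\<lambda>s. \<psi> s x) t"

definition lie_pow :: "(real \<Rightarrow> 'a::euclidean_space \<Rightarrow> 'a) \<Rightarrow> nat \<Rightarrow> (real \<Rightarrow> 'a \<Rightarrow> real) \<Rightarrow> real \<Rightarrow> 'a \<Rightarrow> real"
  where "lie_pow F j \<psi> = (lie F ^^ j) \<psi>"

text \<open>Lie derivative along an input matrix G, given by its columns: G t x $ j is the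
  j-th column. The result is the row vector with j-th entry (d psi / d state) (column j).\<close>
definition lieG :: "(real \<Rightarrow> 'a::euclidean_space \<Rightarrow> 'a^'m) \<Rightarrow> (real \<Rightarrow> 'a \<Rightarrow> real) \<Rightarrow> real \<Rightarrow> 'a \<Rightarrow> real^'m"
  where "lieG G \<psi> t x = (\<chi> j. frechet_derivative (\<psi> t) (at x) (G t x $ j))"

definition cols :: "(real \<Rightarrow> 'b \<Rightarrow> real^'m^'n) \<Rightarrow> real \<Rightarrow> 'b \<Rightarrow> (real^'n)^'m"
  where "cols g t x = transpose (g t x)"

definition colmult :: "('a::real_vector)^'m \<Rightarrow> real^'m \<Rightarrow> 'a"
  where "colmult G w = (\<Sum>j\<in>UNIV. w $ j *\<^sub>R G $ j)"

definition diagm :: "real^'m \<Rightarrow> real^'m^'m"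
  where "diagm z = (\<chi> i j. if i = j then z $ i else 0)"

text \<open>The stacked vector z-tilde is an element of real^'z where the finite type 'z is
  enumerated by idx :: 'z => 'm \<times> nat, a bijection onto {(k,j). j < rho k};
  coordinate q carries z_k^(j) where idx q = (k,j).\<close>
definition zc :: "('z \<Rightarrow> 'm \<times> nat) \<Rightarrow> real^'z \<Rightarrow> 'm \<Rightarrow> nat \<Rightarrow> real"
  where "zc idx zt k j = zt $ (inv idx (k, j))"

text \<open>z = (z_1, ..., z_r) with z_k = z_k^(0).\<close>
definition zvec :: "('z \<Rightarrow> 'm \<times> nat) \<Rightarrow> real^'z \<Rightarrow> real^'m"
  where "zvec idx zt = (\<chi> k. zc idx zt k 0)"

text \<open>S_{k,p} = 1/2 sum_{j=1}^{p} binom(p+1,j) z_k^(p+1-j) z_k^(j)  (i.e. S_{k,i-1} with i = p+1).\<close>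
definition Scoef :: "('z \<Rightarrow> 'm \<times> nat) \<Rightarrow> real^'z \<Rightarrow> 'm \<Rightarrow> nat \<Rightarrow> real"
  where "Scoef idx zt k p = (1/2) * (\<Sum>j\<in>{1..p}. real ((p+1) choose j) * zc idx zt k (p+1-j) * zc idx zt k j)"

definition Omega_g :: "(real \<Rightarrow> real^'n \<Rightarrow> real^'n) \<Rightarrow> (real \<Rightarrow> real^'n \<Rightarrow> real^'m^'n)
   \<Rightarrow> (real \<Rightarrow> real^'n \<Rightarrow> real^'m) \<Rightarrow> ('m \<Rightarrow> nat) \<Rightarrow> real \<Rightarrow> real^'n \<Rightarrow> real^'m^'m"
  where "Omega_g f g \<phi> \<rho> t x = (\<chi> k. lieG (cols g) (lie_pow f (\<rho> k - 1) (\<lambda>s y. \<phi> s y $ k)) t x)"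

definition Omega_f :: "(real \<Rightarrow> real^'n \<Rightarrow> real^'n) \<Rightarrow> (real \<Rightarrow> real^'n \<Rightarrow> real^'m)
   \<Rightarrow> ('m \<Rightarrow> nat) \<Rightarrow> ('z \<Rightarrow> 'm \<times> nat) \<Rightarrow> real \<Rightarrow> real^'n \<Rightarrow> real^'z \<Rightarrow> real^'m"
  where "Omega_f f \<phi> \<rho> idx t x zt =
     (\<chi> k. Scoef idx zt k (\<rho> k - 1) + lie_pow f (\<rho> k) (\<lambda>s y. \<phi> s y $ k) t x)"

definition fA :: "(real \<Rightarrow> real^'n \<Rightarrow> real^'n) \<Rightarrow> (real \<Rightarrow> real^'n \<Rightarrow> real^'m^'n)
   \<Rightarrow> (real \<Rightarrow> real^'n \<Rightarrow> real^'m) \<Rightarrow> ('m \<Rightarrow> nat) \<Rightarrow> ('z \<Rightarrow> 'm \<times> nat)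
   \<Rightarrow> real \<Rightarrow> (real^'n) \<times> (real^'z) \<Rightarrow> (real^'n) \<times> (real^'z)"
  where "fA f g \<phi> \<rho> idx t xA =
     (let x = fst xA; zt = snd xA in
       (f t x - g t x *v (matrix_inv (Omega_g f g \<phi> \<rho> t x) *v Omega_f f \<phi> \<rho> idx t x zt),
        \<chi> q. (case idx q of (k, j) \<Rightarrow> if j + 1 < \<rho> k then zc idx zt k (j + 1) else 0)))"

definition gA :: "(real \<Rightarrow> real^'n \<Rightarrow> real^'n) \<Rightarrow> (real \<Rightarrow> real^'n \<Rightarrow> real^'m^'n)
   \<Rightarrow> (real \<Rightarrow> real^'n \<Rightarrow> real^'m) \<Rightarrow> ('m \<Rightarrow> nat) \<Rightarrow> ('z \<Rightarrow> 'm \<times> nat)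
   \<Rightarrow> real \<Rightarrow> (real^'n) \<times> (real^'z) \<Rightarrow> ((real^'n) \<times> (real^'z))^'m"
  where "gA f g \<phi> \<rho> idx t xA =
     (let x = fst xA; zt = snd xA;
          M = - (g t x ** matrix_inv (Omega_g f g \<phi> \<rho> t x) ** diagm (zvec idx zt)) in
       (\<chi> w. (column w M,
              \<chi> q. (case idx q of (k, j) \<Rightarrow> if k = w \<and> j = \<rho> k - 1 then 1 else 0))))"

definition s_beta :: "real \<Rightarrow> real^'m \<Rightarrow> real^'m"
  where "s_beta \<beta> \<xi> = (\<chi> i. 2 * \<beta> * (1 / (exp (- (\<xi> $ i)) + 1) - 1/2))"

definition fI :: "(real \<Rightarrow> 'a::euclidean_space \<Rightarrow> 'a) \<Rightarrow> (real \<Rightarrow> 'a \<Rightarrow> 'a^'m) \<Rightarrow> real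
   \<Rightarrow> real \<Rightarrow> 'a \<times> (real^'m) \<Rightarrow> 'a \<times> (real^'m)"
  where "fI FA GA \<beta> t xI = (FA t (fst xI) + colmult (GA t (fst xI)) (s_beta \<beta> (snd xI)), 0)"

definition gI :: "real \<Rightarrow> 'a::euclidean_space \<times> (real^'m) \<Rightarrow> ('a \<times> (real^'m))^'m"
  where "gI t xI = (\<chi> j. (0, axis j 1))"

end

(* While L_gA L_fA^j h_k vanishes identically, evaluating it at z = (1, ..., 1) and cancelling
   the invertible matrix Omega_g gives L_g L_f^j h_k = 0, so L_fA^(j+1) h_k is the function
   L_f^(j+1) h_k of (t, x) alone. Such functions are annihilated by g_I, and along f_I they
   differentiate as along f_A plus s_beta(xi) . L_gA, whose last term vanishes below sigma_k.
   Hence up to order sigma_k - 1 the Lie derivatives of Sigma_I are those of Sigma_A lifted to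
   x_I, and the input of Sigma_I does not appear. At order sigma_k, differentiating
     L_fA^sigma_k h_k + sum_j s_beta(xi_j) (L_gA L_fA^(sigma_k - 1) h_k)_j
   in xi_j shows that the k-th row of Gamma_gI is the row L_gA L_fA^(sigma_k - 1) h_k with its
   j-th entry scaled by s_beta'(xi_j) > 0. The j-th column of g_A carries the factor z_j, so
   the j-th column of Gamma_gI vanishes wherever z_j = 0. *)

theory Submission
  imports Defs
begin

section \<open>Smooth maps\<close>

lemma smooth_imp_differentiable: "smooth F \<Longrightarrow> F differentiable (at x)"
  by (erule smooth.cases) auto

lemma smooth_frechet_derivative: "smooth F \<Longrightarrow> smooth (\<lambda>x. frechet_derivative F (at x) v)"
  by (erule smooth.cases) auto

lemma smooth_has_derivative: "smooth F \<Longrightarrow> (F has_derivative frechet_derivative F (at x)) (at x)"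
  using smooth_imp_differentiable frechet_derivative_works by blast

lemma smoothI_coinduct:
  assumes "X H"
    and "\<And>H. X H \<Longrightarrow> (\<forall>x. H differentiable (at x)) \<and> (\<forall>v. X (\<lambda>x. frechet_derivative H (at x) v))"
  shows "smooth H"
  using assms(1) by (rule smooth.coinduct) (use assms(2) in blast)

lemma smooth_const: "smooth (\<lambda>x. c)"
  by (rule smoothI_coinduct[where X="\<lambda>H. \<exists>c. H = (\<lambda>x. c)"]) auto

lemma smooth_bounded_linear_compose:
  fixes L :: "'b::real_normed_vector \<Rightarrow> 'c::real_normed_vector" and F :: "'a::real_normed_vector \<Rightarrow> 'b"
  assumes "bounded_linear L" "smooth F"
  shows "smooth (\<lambda>x. L (F x))"
proof (rule smoothI_coinduct[where
      X="\<lambda>H. \<exists>L (F::'a \<Rightarrow> 'b). bounded_linear L \<and> smooth F \<and> H = (\<lambda>x. L (F x))"])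
  fix H :: "'a \<Rightarrow> 'c"
  assume "\<exists>L (F::'a \<Rightarrow> 'b). bounded_linear L \<and> smooth F \<and> H = (\<lambda>x. L (F x))"
  then obtain L and F :: "'a \<Rightarrow> 'b" where L: "bounded_linear L" and F: "smooth F" and H: "H = (\<lambda>x. L (F x))"
    by blast
  have D: "(H has_derivative (\<lambda>v. L (frechet_derivative F (at x) v))) (at x)" for x
    unfolding H using bounded_linear.has_derivative[OF L smooth_has_derivative[OF F]] .
  then have "(\<lambda>x. frechet_derivative H (at x) v) = (\<lambda>x. L (frechet_derivative F (at x) v))" for v
    by (simp add: frechet_derivative_at[OF D, symmetric])
  then show "(\<forall>x. H differentiable at x) \<and>
      (\<forall>v. \<exists>L (F::'a \<Rightarrow> 'b). bounded_linear L \<and> smooth F \<and>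
        (\<lambda>x. frechet_derivative H (at x) v) = (\<lambda>x. L (F x)))"
    using D differentiable_def L smooth_frechet_derivative[OF F] by blast
qed (use assms in blast)

lemma smooth_add:
  fixes F G :: "'a::real_normed_vector \<Rightarrow> 'b::real_normed_vector"
  assumes "smooth F" "smooth G"
  shows "smooth (\<lambda>x. F x + G x)"
proof (rule smoothI_coinduct[where X="\<lambda>H. \<exists>F G. smooth F \<and> smooth G \<and> H = (\<lambda>x. F x + G x)"])
  fix H :: "'a \<Rightarrow> 'b"
  assume "\<exists>F G. smooth F \<and> smooth G \<and> H = (\<lambda>x. F x + G x)"
  then obtain F G where F: "smooth F" and G: "smooth G" and H: "H = (\<lambda>x. F x + G x)"
    by blast
  have D: "(H has_derivative (\<lambda>v. frechet_derivative F (at x) v + frechet_derivative G (at x) v)) (at x)"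
    for x
    unfolding H using has_derivative_add[OF smooth_has_derivative[OF F] smooth_has_derivative[OF G]] .
  then have "(\<lambda>x. frechet_derivative H (at x) v) =
      (\<lambda>x. frechet_derivative F (at x) v + frechet_derivative G (at x) v)" for v
    by (simp add: frechet_derivative_at[OF D, symmetric])
  then show "(\<forall>x. H differentiable at x) \<and>
      (\<forall>v. \<exists>F G. smooth F \<and> smooth G \<and> (\<lambda>x. frechet_derivative H (at x) v) = (\<lambda>x. F x + G x))"
    using D differentiable_def smooth_frechet_derivative[OF F] smooth_frechet_derivative[OF G] by blast
qed (use assms in blast)

lemma smooth_sum:
  assumes "finite I" "\<And>i. i \<in> I \<Longrightarrow> smooth (F i)"
  shows "smooth (\<lambda>x. \<Sum>i\<in>I. F i x)"
  using assms by (induction I rule: finite_induct) (simp_all add: smooth_const smooth_add)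

text \<open>Products are handled by coinduction over finite sums of products, a class that is
  closed under directional derivatives by the product rule.\<close>

definition sum_prods :: "(('a \<Rightarrow> real) \<times> ('a \<Rightarrow> real)) list \<Rightarrow> 'a \<Rightarrow> real" where
  "sum_prods ps x = (\<Sum>p\<leftarrow>ps. fst p x * snd p x)"

definition sum_prods_deriv ::
    "(('a::real_normed_vector \<Rightarrow> real) \<times> ('a \<Rightarrow> real)) list \<Rightarrow> 'a \<Rightarrow> (('a \<Rightarrow> real) \<times> ('a \<Rightarrow> real)) list" where
  "sum_prods_deriv ps v = concat (map (\<lambda>p. [(\<lambda>x. frechet_derivative (fst p) (at x) v, snd p),
                                          (fst p, \<lambda>x. frechet_derivative (snd p) (at x) v)]) ps)"

lemma has_derivative_sum_prods:
  assumes "\<forall>p\<in>set ps. smooth (fst p) \<and> smooth (snd p)"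
  shows "(sum_prods ps has_derivative (\<lambda>v. sum_prods (sum_prods_deriv ps v) x)) (at x)"
  using assms
proof (induction ps)
  case Nil
  then show ?case by (simp add: sum_prods_def sum_prods_deriv_def)
next
  case (Cons p ps)
  have "sum_prods (p # ps) = (\<lambda>x. fst p x * snd p x + sum_prods ps x)"
    by (simp add: sum_prods_def fun_eq_iff)
  moreover have "((\<lambda>x. fst p x * snd p x + sum_prods ps x) has_derivative
      (\<lambda>v. fst p x * frechet_derivative (snd p) (at x) v + frechet_derivative (fst p) (at x) v * snd p x
           + sum_prods (sum_prods_deriv ps v) x)) (at x)"
    using Cons by (intro has_derivative_add has_derivative_mult smooth_has_derivative) auto
  ultimately show ?case
    by (simp add: sum_prods_def sum_prods_deriv_def algebra_simps)
qed

lemma smooth_sum_prods: "\<forall>p\<in>set ps. smooth (fst p) \<and> smooth (snd p) \<Longrightarrow> smooth (sum_prods ps)"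
proof (rule smoothI_coinduct[where
      X="\<lambda>H. \<exists>ps. (\<forall>p\<in>set ps. smooth (fst p) \<and> smooth (snd p)) \<and> H = sum_prods ps"])
  fix H :: "'a \<Rightarrow> real"
  assume "\<exists>ps. (\<forall>p\<in>set ps. smooth (fst p) \<and> smooth (snd p)) \<and> H = sum_prods ps"
  then obtain ps where ps: "\<forall>p\<in>set ps. smooth (fst p) \<and> smooth (snd p)" and H: "H = sum_prods ps"
    by blast
  note D = has_derivative_sum_prods[OF ps]
  have "(\<lambda>x. frechet_derivative H (at x) v) = sum_prods (sum_prods_deriv ps v)" for v
    unfolding H by (simp add: frechet_derivative_at[OF D, symmetric])
  moreover have "\<forall>p\<in>set (sum_prods_deriv ps v). smooth (fst p) \<and> smooth (snd p)" for v
    using ps smooth_frechet_derivative by (auto simp: sum_prods_deriv_def)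
  ultimately show "(\<forall>x. H differentiable at x) \<and> (\<forall>v. \<exists>ps. (\<forall>p\<in>set ps. smooth (fst p) \<and> smooth (snd p)) \<and>
      (\<lambda>x. frechet_derivative H (at x) v) = sum_prods ps)"
    using D differentiable_def H by blast
qed auto

lemma smooth_mult: "smooth F \<Longrightarrow> smooth G \<Longrightarrow> smooth (\<lambda>x. F x * G x :: real)"
  using smooth_sum_prods[of "[(F, G)]"] by (simp add: sum_prods_def[abs_def])

lemma smooth_directional_derivative:
  fixes P :: "'a::euclidean_space \<Rightarrow> real" and V :: "'a \<Rightarrow> 'a"
  assumes P: "smooth P" and V: "smooth V"
  shows "smooth (\<lambda>p. frechet_derivative P (at p) (V p))"
proof -
  have "frechet_derivative P (at p) (V p) = (\<Sum>b\<in>Basis. (V p \<bullet> b) * frechet_derivative P (at p) b)" for p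
  proof -
    have "linear (frechet_derivative P (at p))"
      using linear_frechet_derivative smooth_imp_differentiable[OF P] by blast
    then show ?thesis
      by (subst euclidean_representation[symmetric, of "V p"]) (simp add: linear_sum linear_scale)
  qed
  moreover have "smooth (\<lambda>p. \<Sum>b\<in>Basis. (V p \<bullet> b) * frechet_derivative P (at p) b)"
    by (intro smooth_sum smooth_mult smooth_bounded_linear_compose[OF bounded_linear_inner_left V]
        smooth_frechet_derivative[OF P] finite_Basis)
  ultimately show ?thesis by simp
qed

section \<open>Lie derivatives of smooth time-varying functions\<close>

lemma has_derivative_state:
  fixes \<psi> :: "real \<Rightarrow> 'a::real_normed_vector \<Rightarrow> 'b::real_normed_vector"
  assumes "smooth (case_prod \<psi>)"
  shows "(\<psi> t has_derivative (\<lambda>v. frechet_derivative (case_prod \<psi>) (at (t, x)) (0, v))) (at x)"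
proof -
  have "((\<lambda>y. (t, y)) has_derivative (\<lambda>v. (0, v))) (at x)"
    by (auto intro!: derivative_eq_intros)
  from diff_chain_at[OF this smooth_has_derivative[OF assms, of "(t, x)"]]
  show ?thesis by (simp add: o_def)
qed

lemma frechet_derivative_state:
  fixes \<psi> :: "real \<Rightarrow> 'a::real_normed_vector \<Rightarrow> 'b::real_normed_vector"
  assumes "smooth (case_prod \<psi>)"
  shows "frechet_derivative (\<psi> t) (at x) = (\<lambda>v. frechet_derivative (case_prod \<psi>) (at (t, x)) (0, v))"
  by (rule frechet_derivative_at[OF has_derivative_state[OF assms], symmetric])

lemma smooth_imp_differentiable_state:
  fixes \<psi> :: "real \<Rightarrow> 'a::real_normed_vector \<Rightarrow> 'b::real_normed_vector"
  assumes "smooth (case_prod \<psi>)"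
  shows "\<psi> t differentiable (at x)"
  by (rule differentiableI[OF has_derivative_state[OF assms]])

lemma smooth_imp_differentiable_on_fst:
  fixes \<psi> :: "real \<Rightarrow> 'a::real_normed_vector \<Rightarrow> 'b::real_normed_vector"
  assumes "smooth (case_prod \<psi>)"
  shows "(\<lambda>q. \<psi> t (fst q)) differentiable (at p)"
  using differentiable_compose[where f="\<psi> t" and g=fst, OF smooth_imp_differentiable_state[OF assms]
      bounded_linear_imp_differentiable[OF bounded_linear_fst]] .

lemma has_real_derivative_time:
  fixes \<psi> :: "real \<Rightarrow> 'a::real_normed_vector \<Rightarrow> real"
  assumes "smooth (case_prod \<psi>)"
  shows "((\<lambda>s. \<psi> s x) has_real_derivative frechet_derivative (case_prod \<psi>) (at (t, x)) (1, 0)) (at t)"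
proof -
  let ?D = "frechet_derivative (case_prod \<psi>) (at (t, x))"
  have "((\<lambda>s. (s, x)) has_derivative (\<lambda>h. (h, 0))) (at t)"
    by (auto intro!: derivative_eq_intros)
  from diff_chain_at[OF this smooth_has_derivative[OF assms, of "(t, x)"]]
  have D: "((\<lambda>s. \<psi> s x) has_derivative (\<lambda>h. ?D (h, 0))) (at t)"
    by (simp add: o_def)
  have lin: "linear ?D"
    using linear_frechet_derivative smooth_imp_differentiable[OF assms] by blast
  have eq: "(\<lambda>h. ?D (h, 0)) = (*) (?D (1, 0))"
  proof
    fix h :: real
    have "?D (h, 0) = ?D (h *\<^sub>R (1, 0))"
      by simp
    also have "\<dots> = h *\<^sub>R ?D (1, 0)"
      using lin by (rule linear_scale)
    finally show "?D (h, 0) = ?D (1, 0) * h"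
      by (simp only: real_scaleR_def mult.commute)
  qed
  from D show ?thesis
    unfolding has_field_derivative_def eq .
qed

lemma lie_eq_frechet_derivative:
  fixes \<psi> :: "real \<Rightarrow> 'a::euclidean_space \<Rightarrow> real"
  assumes "smooth (case_prod \<psi>)"
  shows "lie F \<psi> t x = frechet_derivative (case_prod \<psi>) (at (t, x)) (1, F t x)"
proof -
  have "linear (frechet_derivative (case_prod \<psi>) (at (t, x)))"
    using linear_frechet_derivative smooth_imp_differentiable[OF assms] by blast
  then have "frechet_derivative (case_prod \<psi>) (at (t, x)) ((0, F t x) + (1, 0)) =
      frechet_derivative (case_prod \<psi>) (at (t, x)) (0, F t x) +
      frechet_derivative (case_prod \<psi>) (at (t, x)) (1, 0)"
    by (rule linear_add)
  then show ?thesis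
    unfolding lie_def frechet_derivative_state[OF assms] DERIV_imp_deriv[OF has_real_derivative_time[OF assms]]
    by simp
qed

lemma smooth_lie:
  fixes \<psi> :: "real \<Rightarrow> 'a::euclidean_space \<Rightarrow> real"
  assumes "smooth (case_prod \<psi>)" "smooth (case_prod F)"
  shows "smooth (case_prod (lie F \<psi>))"
proof -
  have eq: "case_prod (lie F \<psi>) =
      (\<lambda>p. frechet_derivative (case_prod \<psi>) (at p) ((1, 0) + (0, case_prod F p)))"
    by (simp add: fun_eq_iff lie_eq_frechet_derivative[OF assms(1)])
  have "bounded_linear (\<lambda>y::'a. (0::real, y))"
    by (intro bounded_linear_Pair bounded_linear_zero bounded_linear_ident)
  then have "smooth (\<lambda>p. (1, 0) + (0::real, case_prod F p))"
    by (intro smooth_add smooth_const smooth_bounded_linear_compose[of "\<lambda>y. (0::real, y)", OF _ assms(2)])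
  from smooth_directional_derivative[OF assms(1) this] show ?thesis
    unfolding eq .
qed

lemma smooth_lie_pow:
  fixes \<psi> :: "real \<Rightarrow> 'a::euclidean_space \<Rightarrow> real"
  assumes "smooth (case_prod \<psi>)" "smooth (case_prod F)"
  shows "smooth (case_prod (lie_pow F j \<psi>))"
  by (induction j) (auto simp: lie_pow_def assms smooth_lie)

lemma lie_pow_Suc: "lie_pow F (Suc j) \<psi> = lie F (lie_pow F j \<psi>)"
  by (simp add: lie_pow_def)

lemma lieG_cols_nth: "lieG (cols g) \<psi> t x $ l = frechet_derivative (\<psi> t) (at x) (column l (g t x))"
  by (simp add: lieG_def cols_def row_transpose[symmetric] row_def)

lemma smooth_lieG_cols_nth:
  fixes \<psi> :: "real \<Rightarrow> real^'n \<Rightarrow> real" and g :: "real \<Rightarrow> real^'n \<Rightarrow> real^'m^'n"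
  assumes "smooth (case_prod \<psi>)" "smooth (case_prod g)"
  shows "smooth (case_prod (\<lambda>t x. lieG (cols g) \<psi> t x $ l))"
proof -
  have eq: "case_prod (\<lambda>t x. lieG (cols g) \<psi> t x $ l) =
      (\<lambda>p. frechet_derivative (case_prod \<psi>) (at p) ((\<lambda>M. (0, column l M)) (case_prod g p)))"
    by (simp add: fun_eq_iff lieG_cols_nth frechet_derivative_state[OF assms(1)])
  have "linear (\<lambda>M::real^'m^'n. (0::real, column l M))"
    by (auto simp: linear_iff column_def vec_eq_iff)
  then have "smooth (\<lambda>p. (0::real, column l (case_prod g p)))"
    using smooth_bounded_linear_compose[of "\<lambda>M. (0::real, column l M)", OF _ assms(2)]
    by (simp add: linear_conv_bounded_linear)
  then show ?thesis
    unfolding eq by (rule smooth_directional_derivative[OF assms(1)])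
qed

lemma smooth_vec_nth:
  assumes "smooth (case_prod h)"
  shows "smooth (case_prod (\<lambda>s y. h s y $ k))"
proof -
  have "case_prod (\<lambda>s y. h s y $ k) = (\<lambda>p. case_prod h p $ k)"
    by (simp add: fun_eq_iff split_beta)
  then show ?thesis
    using smooth_bounded_linear_compose[OF bounded_linear_vec_nth assms] by simp
qed

section \<open>Differentiability of the matrix inverse\<close>

lemma matrix_inv_mult:
  assumes "invertible A"
  shows "A ** matrix_inv A = mat 1 \<and> matrix_inv A ** A = mat 1"
  using assms unfolding invertible_def matrix_inv_def by (rule someI_ex)

lemma matrix_inv_nth_cramer:
  fixes A :: "real^'n^'n"
  assumes "invertible A"
  shows "matrix_inv A $ i $ j = det (\<chi> a b. if b = i then axis j 1 $ a else A $ a $ b) / det A"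
proof -
  have "A *v (matrix_inv A *v axis j 1) = axis j 1"
    using matrix_inv_mult[OF assms] by (simp add: matrix_vector_mul_assoc)
  moreover have "det A \<noteq> 0"
    using assms invertible_det_nz by blast
  ultimately have "matrix_inv A *v axis j 1 =
      (\<chi> k. det (\<chi> a b. if b = k then axis j 1 $ a else A $ a $ b) / det A)"
    by (simp add: cramer)
  then show ?thesis
    by (simp add: matrix_vector_mult_basis column_def vec_eq_iff)
qed

lemma differentiable_prod:
  fixes f :: "'i \<Rightarrow> 'a::real_normed_vector \<Rightarrow> real"
  assumes "\<And>i. i \<in> I \<Longrightarrow> f i differentiable (at x)"
  shows "(\<lambda>x. \<Prod>i\<in>I. f i x) differentiable (at x)"
proof -
  have "\<And>i. i \<in> I \<Longrightarrow> (f i has_derivative frechet_derivative (f i) (at x)) (at x)"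
    using assms frechet_derivative_works by blast
  from has_derivative_prod[OF this] show ?thesis
    by (rule differentiableI)
qed

lemma differentiable_det:
  fixes M :: "'a::real_normed_vector \<Rightarrow> real^'n^'n"
  assumes "\<And>a b. (\<lambda>y. M y $ a $ b) differentiable (at y0)"
  shows "(\<lambda>y. det (M y)) differentiable (at y0)"
  unfolding det_def by (intro differentiable_sum ballI finite differentiable_mult differentiable_const
      differentiable_prod assms)

lemma differentiable_matrix_inv_nth:
  fixes M :: "'a::real_normed_vector \<Rightarrow> real^'n^'n"
  assumes "\<And>y. invertible (M y)" and "\<And>a b. (\<lambda>y. M y $ a $ b) differentiable (at y0)"
  shows "(\<lambda>y. matrix_inv (M y) $ i $ j) differentiable (at y0)"
proof -
  have "(\<lambda>y. det (\<chi> a b. if b = i then axis j 1 $ a else M y $ a $ b)) differentiable (at y0)"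
  proof (rule differentiable_det)
    fix a b
    show "(\<lambda>y. (\<chi> a b. if b = i then axis j 1 $ a else M y $ a $ b) $ a $ b) differentiable (at y0)"
      by (cases "b = i") (simp_all add: assms(2))
  qed
  moreover have "(\<lambda>y. det (M y)) differentiable (at y0)"
    by (rule differentiable_det[OF assms(2)])
  moreover have "det (M y0) \<noteq> 0"
    using assms(1) invertible_det_nz by blast
  ultimately show ?thesis
    by (simp add: matrix_inv_nth_cramer[OF assms(1)])
qed

lemma eq_0_if_inner_column_matrix_inv_eq_0:
  fixes A :: "real^'m^'m"
  assumes "invertible A" and "\<And>i. c \<bullet> column i (matrix_inv A) = 0"
  shows "c = 0"
proof -
  have "c v* matrix_inv A = 0"
    using assms(2) by (simp add: vec_eq_iff vector_matrix_mult_def inner_vec_def column_def mult.commute)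
  then have "c v* (matrix_inv A ** A) = 0"
    by (simp add: vector_matrix_mul_assoc[symmetric])
  then show ?thesis
    using matrix_inv_mult[OF assms(1)] by simp
qed

lemma rank_lt_card_if_zero_column:
  fixes A :: "real^'m^'m"
  assumes "\<And>k. A $ k $ i = 0"
  shows "rank A < CARD('m)"
proof -
  have "A *v axis i 1 = 0"
    using assms by (simp add: matrix_vector_mult_basis column_def vec_eq_iff)
  moreover have "axis i 1 \<noteq> (0::real^'m)"
    by (simp add: axis_eq_0_iff)
  ultimately have "rank A \<noteq> CARD('m)"
    using matrix_nonfull_linear_equations_eq by blast
  then show ?thesis
    using rank_bound[of A] by simp
qed

lemma has_derivative_compose_fst:
  assumes "F differentiable (at (fst p))"
  shows "((\<lambda>q. F (fst q)) has_derivative (\<lambda>v. frechet_derivative F (at (fst p)) (fst v))) (at p)"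
  using diff_chain_at[OF has_derivative_fst[OF has_derivative_ident]
      assms[unfolded frechet_derivative_works]]
  by (simp add: o_def)

lemma frechet_derivative_compose_fst:
  assumes "F differentiable (at (fst p))"
  shows "frechet_derivative (\<lambda>q. F (fst q)) (at p) v = frechet_derivative F (at (fst p)) (fst v)"
  by (simp add: frechet_derivative_at[OF has_derivative_compose_fst[OF assms], symmetric])

lemma lie_on_fst:
  assumes "\<psi> t differentiable (at (fst p))"
  shows "lie F (\<lambda>s q. \<psi> s (fst q)) t p =
    frechet_derivative (\<psi> t) (at (fst p)) (fst (F t p)) + deriv (\<lambda>s. \<psi> s (fst p)) t"
  by (simp add: lie_def frechet_derivative_compose_fst[OF assms])

lemma lieG_on_fst_nth:
  assumes "\<psi> t differentiable (at (fst p))"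
  shows "lieG G (\<lambda>s q. \<psi> s (fst q)) t p $ j = frechet_derivative (\<psi> t) (at (fst p)) (fst (G t p $ j))"
  by (simp add: lieG_def frechet_derivative_compose_fst[OF assms])

lemma frechet_derivative_separable_sum:
  fixes E :: "'a::real_normed_vector \<Rightarrow> real" and K :: "'m::finite \<Rightarrow> 'a \<Rightarrow> real"
  assumes "E differentiable (at a)" and "\<And>j. K j differentiable (at a)"
    and r: "\<And>y. (r has_real_derivative r' y) (at y)"
  shows "frechet_derivative (\<lambda>q. E (fst q) + (\<Sum>j\<in>UNIV. r (snd q $ j) * K j (fst q)))
      (at (a, \<xi>)) (0, axis i 1) = r' (\<xi> $ i) * K i a"
proof -
  let ?DE = "frechet_derivative E (at a)" and ?DK = "\<lambda>j. frechet_derivative (K j) (at a)"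
  have hE: "((\<lambda>q. E (fst q)) has_derivative (\<lambda>v. ?DE (fst v))) (at (a, \<xi>))"
    using has_derivative_compose_fst[of E "(a, \<xi>)"] assms(1) by simp
  have hK: "((\<lambda>q. K j (fst q)) has_derivative (\<lambda>v. ?DK j (fst v))) (at (a, \<xi>))" for j
    using has_derivative_compose_fst[of "K j" "(a, \<xi>)"] assms(2) by simp
  have hr: "((\<lambda>q. r (snd q $ j)) has_derivative (\<lambda>v. r' (\<xi> $ j) * snd v $ j)) (at (a, \<xi>))" for j
  proof -
    have "((\<lambda>q. snd q $ j) has_derivative (\<lambda>v. snd v $ j)) (at (a, \<xi>))"
      by (intro bounded_linear_imp_has_derivative
          bounded_linear_compose[OF bounded_linear_vec_nth bounded_linear_snd])
    from diff_chain_at[OF this r[of "snd (a, \<xi>) $ j", unfolded has_field_derivative_def]]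
    show ?thesis by (simp add: o_def)
  qed
  have "((\<lambda>q. E (fst q) + (\<Sum>j\<in>UNIV. r (snd q $ j) * K j (fst q))) has_derivative
      (\<lambda>v. ?DE (fst v) + (\<Sum>j\<in>UNIV. r (snd (a, \<xi>) $ j) * ?DK j (fst v) +
        r' (\<xi> $ j) * snd v $ j * K j (fst (a, \<xi>))))) (at (a, \<xi>))"
    by (intro has_derivative_add has_derivative_sum has_derivative_mult hE hK hr)
  moreover have "?DE 0 = 0" "?DK j 0 = 0" for j
    using assms(1,2) linear_frechet_derivative linear_0 by blast+
  moreover have "r' (\<xi> $ j) * axis i 1 $ j * K j a = (if j = i then r' (\<xi> $ i) * K i a else 0)" for j
    by (simp add: axis_def)
  ultimately show ?thesis
    by (simp add: frechet_derivative_at[symmetric])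
qed

section \<open>The integral augmentation\<close>

definition sigmoid :: "real \<Rightarrow> real \<Rightarrow> real" where
  "sigmoid \<beta> y = 2 * \<beta> * (1 / (exp (- y) + 1) - 1 / 2)"

definition sigmoid_deriv :: "real \<Rightarrow> real \<Rightarrow> real" where
  "sigmoid_deriv \<beta> y = 2 * \<beta> * exp (- y) / (exp (- y) + 1)\<^sup>2"

lemma s_beta_nth: "s_beta \<beta> \<xi> $ j = sigmoid \<beta> (\<xi> $ j)"
  by (simp add: s_beta_def sigmoid_def)

lemma has_real_derivative_sigmoid: "(sigmoid \<beta> has_real_derivative sigmoid_deriv \<beta> y) (at y)"
proof -
  have "exp (- y) + 1 > 0"
    using exp_gt_zero[of "- y"] by linarith
  then show ?thesis
    unfolding sigmoid_def[abs_def] sigmoid_deriv_def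
    by (auto intro!: derivative_eq_intros simp: power2_eq_square)
qed

lemma sigmoid_deriv_pos:
  assumes "\<beta> > 0"
  shows "sigmoid_deriv \<beta> y > 0"
proof -
  have "exp (- y) + 1 > 0"
    using exp_gt_zero[of "- y"] by linarith
  with assms show ?thesis
    by (simp add: sigmoid_deriv_def)
qed

lemma lieG_gI_on_fst:
  assumes "\<Psi> t differentiable (at (fst p))"
  shows "lieG gI (\<lambda>s q. \<Psi> s (fst q)) t p = 0"
proof -
  have "linear (frechet_derivative (\<Psi> t) (at (fst p)))"
    using assms linear_frechet_derivative by blast
  then show ?thesis
    by (simp add: vec_eq_iff lieG_on_fst_nth[of \<Psi> t p, OF assms] gI_def linear_0)
qed

lemma lie_fI_on_fst:
  fixes FA :: "real \<Rightarrow> 'a::euclidean_space \<Rightarrow> 'a" and GA :: "real \<Rightarrow> 'a \<Rightarrow> 'a^'m"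
  assumes "\<Psi> t differentiable (at (fst p))"
  shows "lie (fI FA GA \<beta>) (\<lambda>s q. \<Psi> s (fst q)) t p =
    lie FA \<Psi> t (fst p) + (\<Sum>j\<in>UNIV. sigmoid \<beta> (snd p $ j) * lieG GA \<Psi> t (fst p) $ j)"
proof -
  let ?D = "frechet_derivative (\<Psi> t) (at (fst p))"
  have "linear ?D"
    using assms linear_frechet_derivative by blast
  moreover have "fst (fI FA GA \<beta> t p) = FA t (fst p) + (\<Sum>j\<in>UNIV. sigmoid \<beta> (snd p $ j) *\<^sub>R GA t (fst p) $ j)"
    by (simp add: fI_def colmult_def s_beta_nth)
  ultimately have "?D (fst (fI FA GA \<beta> t p)) =
      ?D (FA t (fst p)) + (\<Sum>j\<in>UNIV. sigmoid \<beta> (snd p $ j) * ?D (GA t (fst p) $ j))"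
    by (simp add: linear_add linear_sum linear_scale)
  then show ?thesis
    unfolding lie_on_fst[where \<psi>=\<Psi> and t=t and p=p, OF assms] by (simp add: lie_def lieG_def)
qed

lemma lie_pow_fI_on_fst:
  fixes FA :: "real \<Rightarrow> 'a::euclidean_space \<Rightarrow> 'a" and GA :: "real \<Rightarrow> 'a \<Rightarrow> 'a^'m"
  assumes diff: "\<And>j t x. j < n \<Longrightarrow> lie_pow FA j \<Psi> t differentiable (at x)"
    and vanish: "\<And>j t x. j + 1 < n \<Longrightarrow> lieG GA (lie_pow FA j \<Psi>) t x = 0"
    and "j < n"
  shows "lie_pow (fI FA GA \<beta>) j (\<lambda>s q. \<Psi> s (fst q)) = (\<lambda>s q. lie_pow FA j \<Psi> s (fst q))"
  using \<open>j < n\<close>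
proof (induction j)
  case 0
  show ?case by (simp add: lie_pow_def)
next
  case (Suc j)
  then have IH: "lie_pow (fI FA GA \<beta>) j (\<lambda>s q. \<Psi> s (fst q)) = (\<lambda>s q. lie_pow FA j \<Psi> s (fst q))"
    by simp
  have "lie (fI FA GA \<beta>) (\<lambda>s q. lie_pow FA j \<Psi> s (fst q)) t p = lie_pow FA (Suc j) \<Psi> t (fst p)" for t p
  proof -
    have "lie (fI FA GA \<beta>) (\<lambda>s q. lie_pow FA j \<Psi> s (fst q)) t p =
        lie FA (lie_pow FA j \<Psi>) t (fst p) +
        (\<Sum>i\<in>UNIV. sigmoid \<beta> (snd p $ i) * lieG GA (lie_pow FA j \<Psi>) t (fst p) $ i)"
      using diff Suc.prems by (intro lie_fI_on_fst) simp
    also have "\<dots> = lie_pow FA (Suc j) \<Psi> t (fst p)"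
      using vanish Suc.prems by (simp add: lie_pow_Suc)
    finally show ?thesis .
  qed
  then show ?case
    by (simp add: lie_pow_Suc IH fun_eq_iff)
qed

text \<open>The differentiability hypotheses are not a formality: off the points of differentiability
  the value of frechet_derivative is arbitrary, even where the partial derivative in
  the direction of the input exists.\<close>

lemma lieG_gI_lie_fI_on_fst_nth:
  fixes FA :: "real \<Rightarrow> 'a::euclidean_space \<Rightarrow> 'a" and GA :: "real \<Rightarrow> 'a \<Rightarrow> 'a^'m"
  assumes "\<And>x. \<Psi> t differentiable (at x)"
    and "(\<lambda>x. lie FA \<Psi> t x) differentiable (at (fst p))"
    and "\<And>i. (\<lambda>x. lieG GA \<Psi> t x $ i) differentiable (at (fst p))"
  shows "lieG gI (lie (fI FA GA \<beta>) (\<lambda>s q. \<Psi> s (fst q))) t p $ j =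
    sigmoid_deriv \<beta> (snd p $ j) * lieG GA \<Psi> t (fst p) $ j"
proof -
  have "lie (fI FA GA \<beta>) (\<lambda>s q. \<Psi> s (fst q)) t =
      (\<lambda>q. lie FA \<Psi> t (fst q) + (\<Sum>i\<in>UNIV. sigmoid \<beta> (snd q $ i) * lieG GA \<Psi> t (fst q) $ i))"
    by (rule ext) (rule lie_fI_on_fst[where \<Psi>=\<Psi> and t=t, OF assms(1)])
  then show ?thesis
    using frechet_derivative_separable_sum[OF assms(2,3) has_real_derivative_sigmoid, where \<xi>="snd p" and i=j]
    by (simp add: lieG_def gI_def)
qed

section \<open>The augmented system\<close>

lemma frechet_derivative_matrix_vector_mult:
  fixes \<psi> :: "real \<Rightarrow> real^'n \<Rightarrow> real" and g :: "real \<Rightarrow> real^'n \<Rightarrow> real^'m^'n"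
  assumes "\<psi> t differentiable (at x)"
  shows "frechet_derivative (\<psi> t) (at x) (g t x *v w) = lieG (cols g) \<psi> t x \<bullet> w"
proof -
  have "linear (frechet_derivative (\<psi> t) (at x))"
    using assms linear_frechet_derivative by blast
  moreover have "g t x *v w = (\<Sum>l\<in>UNIV. w $ l *\<^sub>R column l (g t x))"
    by (simp add: matrix_mult_sum scalar_mult_eq_scaleR)
  ultimately show ?thesis
    by (simp add: linear_sum linear_scale inner_vec_def lieG_cols_nth mult.commute)
qed

lemma diagm_mult_axis: "diagm z *v axis i 1 = z $ i *\<^sub>R axis i (1::real)"
  unfolding matrix_vector_mult_basis by (simp add: column_def diagm_def vec_eq_iff axis_def)

lemma uminus_matrix_vector_mult: "(- A) *v x = - (A *v (x::real^'n))"
  by (simp add: vec_eq_iff matrix_vector_mult_def sum_negf)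

lemma fst_gA_nth:
  "fst (gA f g \<phi> \<rho> idx t p $ i) =
    - (zvec idx (snd p) $ i *\<^sub>R (g t (fst p) *v column i (matrix_inv (Omega_g f g \<phi> \<rho> t (fst p)))))"
  by (simp add: gA_def Let_def matrix_vector_mult_basis[symmetric] uminus_matrix_vector_mult
      matrix_vector_mul_assoc[symmetric] diagm_mult_axis matrix_vector_mult_scaleR)

lemma lieG_gA_on_fst_nth:
  assumes "\<psi> t differentiable (at (fst p))"
  shows "lieG (gA f g \<phi> \<rho> idx) (\<lambda>s q. \<psi> s (fst q)) t p $ i =
    - zvec idx (snd p) $ i * (lieG (cols g) \<psi> t (fst p) \<bullet> column i (matrix_inv (Omega_g f g \<phi> \<rho> t (fst p))))"
proof -
  have "linear (frechet_derivative (\<psi> t) (at (fst p)))"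
    using assms linear_frechet_derivative by blast
  then show ?thesis
    by (simp add: lieG_on_fst_nth[where \<psi>=\<psi> and t=t and p=p, OF assms] fst_gA_nth linear_neg linear_scale
        frechet_derivative_matrix_vector_mult[where \<psi>=\<psi> and t=t and x="fst p", OF assms])
qed

lemma lie_fA_on_fst:
  assumes "\<psi> t differentiable (at (fst p))"
  shows "lie (fA f g \<phi> \<rho> idx) (\<lambda>s q. \<psi> s (fst q)) t p =
    lie f \<psi> t (fst p) - lieG (cols g) \<psi> t (fst p) \<bullet>
      (matrix_inv (Omega_g f g \<phi> \<rho> t (fst p)) *v Omega_f f \<phi> \<rho> idx t (fst p) (snd p))"
proof -
  have "linear (frechet_derivative (\<psi> t) (at (fst p)))"
    using assms linear_frechet_derivative by blast
  then show ?thesis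
    unfolding lie_on_fst[where \<psi>=\<psi> and t=t and p=p, OF assms]
    by (simp add: lie_def fA_def Let_def linear_diff
        frechet_derivative_matrix_vector_mult[where \<psi>=\<psi> and t=t and x="fst p", OF assms])
qed

lemma differentiable_snd_nth: "(\<lambda>q. snd q $ c) differentiable (at p)"
  by (intro bounded_linear_imp_differentiable
      bounded_linear_compose[OF bounded_linear_vec_nth bounded_linear_snd])

locale augmented_system =
  fixes f :: "real \<Rightarrow> real^'n \<Rightarrow> real^'n" and g :: "real \<Rightarrow> real^'n \<Rightarrow> real^'m^'n"
    and \<phi> :: "real \<Rightarrow> real^'n \<Rightarrow> real^'m" and \<rho> :: "'m \<Rightarrow> nat" and idx :: "'z::finite \<Rightarrow> 'm \<times> nat"
  assumes smooth_f: "smooth (case_prod f)" and smooth_g: "smooth (case_prod g)"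
    and smooth_phi: "smooth (case_prod \<phi>)"
    and invertible_Omega_g: "\<And>t x. invertible (Omega_g f g \<phi> \<rho> t x)"
begin

abbreviation "f\<^sub>A \<equiv> fA f g \<phi> \<rho> idx"
abbreviation "g\<^sub>A \<equiv> gA f g \<phi> \<rho> idx"

text \<open>The factor diag(z) in the input matrix of the augmented system is cancelled by
  evaluating at z = (1, ..., 1); what remains is invertible.\<close>

lemma lieG_cols_eq_0_if_lieG_gA_eq_0:
  assumes "\<psi> t differentiable (at x)"
    and "\<And>zt. lieG g\<^sub>A (\<lambda>s q. \<psi> s (fst q)) t (x, zt) = 0"
  shows "lieG (cols g) \<psi> t x = 0"
proof (rule eq_0_if_inner_column_matrix_inv_eq_0[OF invertible_Omega_g])
  fix i
  have "lieG g\<^sub>A (\<lambda>s q. \<psi> s (fst q)) t (x, \<chi> q. 1) $ i = 0"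
    using assms(2) by simp
  then show "lieG (cols g) \<psi> t x \<bullet> column i (matrix_inv (Omega_g f g \<phi> \<rho> t x)) = 0"
    using assms(1) by (simp add: lieG_gA_on_fst_nth zvec_def zc_def)
qed

lemma lie_pow_fA_on_fst:
  assumes "smooth (case_prod \<psi>)"
    and vanish: "\<And>j t p. j + 1 < n \<Longrightarrow> lieG g\<^sub>A (lie_pow f\<^sub>A j (\<lambda>s q. \<psi> s (fst q))) t p = 0"
    and "j < n"
  shows "lie_pow f\<^sub>A j (\<lambda>s q. \<psi> s (fst q)) = (\<lambda>s q. lie_pow f j \<psi> s (fst q))"
  using \<open>j < n\<close>
proof (induction j)
  case 0
  show ?case by (simp add: lie_pow_def)
next
  case (Suc j)
  have diff: "lie_pow f j \<psi> t differentiable (at x)" for t x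
    by (rule smooth_imp_differentiable_state[OF smooth_lie_pow[OF assms(1) smooth_f]])
  have IH: "lie_pow f\<^sub>A j (\<lambda>s q. \<psi> s (fst q)) = (\<lambda>s q. lie_pow f j \<psi> s (fst q))"
    using Suc by simp
  have "lieG (cols g) (lie_pow f j \<psi>) t x = 0" for t x
    using vanish[of j] Suc.prems by (intro lieG_cols_eq_0_if_lieG_gA_eq_0 diff) (simp add: IH)
  then have "lie f\<^sub>A (\<lambda>s q. lie_pow f j \<psi> s (fst q)) t p = lie f (lie_pow f j \<psi>) t (fst p)" for t p
    by (simp add: lie_fA_on_fst diff)
  then show ?case
    by (simp add: lie_pow_Suc IH fun_eq_iff)
qed

lemma smooth_Omega_g_nth: "smooth (case_prod (\<lambda>t x. Omega_g f g \<phi> \<rho> t x $ a $ b))"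
  using smooth_lieG_cols_nth[OF smooth_lie_pow[OF smooth_vec_nth[OF smooth_phi] smooth_f] smooth_g]
  by (simp add: Omega_g_def)

lemma differentiable_matrix_inv_Omega_g_nth:
  "(\<lambda>q. matrix_inv (Omega_g f g \<phi> \<rho> t (fst q)) $ a $ b) differentiable (at p)"
  using invertible_Omega_g smooth_imp_differentiable_on_fst[OF smooth_Omega_g_nth]
  by (rule differentiable_matrix_inv_nth)

lemma differentiable_Omega_f_nth:
  "(\<lambda>q. Omega_f f \<phi> \<rho> idx t (fst q) (snd q) $ k) differentiable (at p)"
  unfolding Omega_f_def Scoef_def zc_def vec_lambda_beta
  by (intro differentiable_add differentiable_mult differentiable_sum ballI finite_atLeastAtMost
      differentiable_const differentiable_snd_nth
      smooth_imp_differentiable_on_fst[OF smooth_lie_pow[OF smooth_vec_nth[OF smooth_phi] smooth_f]])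

lemma differentiable_lie_fA_on_fst:
  assumes "smooth (case_prod \<psi>)"
  shows "(\<lambda>q. lie f\<^sub>A (\<lambda>s q. \<psi> s (fst q)) t q) differentiable (at p)"
proof -
  have "(\<lambda>q. lie f\<^sub>A (\<lambda>s q. \<psi> s (fst q)) t q) = (\<lambda>q. lie f \<psi> t (fst q) -
      (\<Sum>l\<in>UNIV. lieG (cols g) \<psi> t (fst q) $ l *
        (\<Sum>k\<in>UNIV. matrix_inv (Omega_g f g \<phi> \<rho> t (fst q)) $ l $ k *
          Omega_f f \<phi> \<rho> idx t (fst q) (snd q) $ k)))"
    by (simp add: fun_eq_iff lie_fA_on_fst smooth_imp_differentiable_state[OF assms] inner_vec_def
        matrix_vector_mult_def)
  then show ?thesis
    by (simp add: smooth_imp_differentiable_on_fst[OF smooth_lie[OF assms smooth_f]]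
        smooth_imp_differentiable_on_fst[OF smooth_lieG_cols_nth[OF assms smooth_g]]
        differentiable_matrix_inv_Omega_g_nth differentiable_Omega_f_nth)
qed

lemma differentiable_lieG_gA_on_fst_nth:
  assumes "smooth (case_prod \<psi>)"
  shows "(\<lambda>q. lieG g\<^sub>A (\<lambda>s q. \<psi> s (fst q)) t q $ i) differentiable (at p)"
proof -
  have "(\<lambda>q. lieG g\<^sub>A (\<lambda>s q. \<psi> s (fst q)) t q $ i) = (\<lambda>q. - snd q $ inv idx (i, 0) *
      (\<Sum>l\<in>UNIV. lieG (cols g) \<psi> t (fst q) $ l * matrix_inv (Omega_g f g \<phi> \<rho> t (fst q)) $ l $ i))"
    by (simp add: fun_eq_iff lieG_gA_on_fst_nth smooth_imp_differentiable_state[OF assms] inner_vec_def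
        column_def zvec_def zc_def)
  then show ?thesis
    by (simp add: smooth_imp_differentiable_on_fst[OF smooth_lieG_cols_nth[OF assms smooth_g]]
        differentiable_matrix_inv_Omega_g_nth differentiable_snd_nth)
qed

lemma lie_pow_fI_on_fst_on_fst:
  assumes "smooth (case_prod \<psi>)"
    and "\<And>j t p. j + 1 < n \<Longrightarrow> lieG g\<^sub>A (lie_pow f\<^sub>A j (\<lambda>s q. \<psi> s (fst q))) t p = 0"
    and "j < n"
  shows "lie_pow (fI f\<^sub>A g\<^sub>A \<beta>) j (\<lambda>s q. \<psi> s (fst (fst q))) = (\<lambda>s q. lie_pow f j \<psi> s (fst (fst q)))"
proof -
  have "lie_pow f\<^sub>A j (\<lambda>s q. \<psi> s (fst q)) t differentiable (at p)" if "j < n" for j t p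
    using lie_pow_fA_on_fst[OF assms(1,2) that]
      smooth_imp_differentiable_on_fst[OF smooth_lie_pow[OF assms(1) smooth_f]] by simp
  from lie_pow_fI_on_fst[where n=n, OF this assms(2,3)] show ?thesis
    using lie_pow_fA_on_fst[OF assms] by simp
qed

lemma lieG_gI_lie_pow_fI_nth:
  assumes "smooth (case_prod \<psi>)"
    and "\<And>j t p. j + 1 < n \<Longrightarrow> lieG g\<^sub>A (lie_pow f\<^sub>A j (\<lambda>s q. \<psi> s (fst q))) t p = 0"
    and "1 \<le> n"
  shows "lieG gI (lie_pow (fI f\<^sub>A g\<^sub>A \<beta>) n (\<lambda>s q. \<psi> s (fst (fst q)))) t p $ j =
    sigmoid_deriv \<beta> (snd p $ j) * lieG g\<^sub>A (\<lambda>s q. lie_pow f (n - 1) \<psi> s (fst q)) t (fst p) $ j"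
proof -
  obtain m where n: "n = Suc m"
    using assms(3) by (cases n) auto
  have smooth: "smooth (case_prod (lie_pow f m \<psi>))"
    by (rule smooth_lie_pow[OF assms(1) smooth_f])
  have "lie_pow (fI f\<^sub>A g\<^sub>A \<beta>) n (\<lambda>s q. \<psi> s (fst (fst q))) =
      lie (fI f\<^sub>A g\<^sub>A \<beta>) (\<lambda>s q. lie_pow f m \<psi> s (fst (fst q)))"
    using lie_pow_fI_on_fst_on_fst[where n=n and j=m, OF assms(1,2)] by (simp add: n lie_pow_Suc)
  then show ?thesis
    using lieG_gI_lie_fI_on_fst_nth[where \<Psi>="\<lambda>s q. lie_pow f m \<psi> s (fst q)",
        OF smooth_imp_differentiable_on_fst[OF smooth] differentiable_lie_fA_on_fst[OF smooth]
        differentiable_lieG_gA_on_fst_nth[OF smooth]]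
    by (simp add: n)
qed

lemma lieG_gI_lie_pow_fI_eq_0:
  assumes "smooth (case_prod \<psi>)"
    and "\<And>j t p. j + 1 < n \<Longrightarrow> lieG g\<^sub>A (lie_pow f\<^sub>A j (\<lambda>s q. \<psi> s (fst q))) t p = 0"
    and "j < n"
  shows "lieG gI (lie_pow (fI f\<^sub>A g\<^sub>A \<beta>) j (\<lambda>s q. \<psi> s (fst (fst q)))) t p = 0"
  using lie_pow_fI_on_fst_on_fst[OF assms] lieG_gI_on_fst[where \<Psi>="\<lambda>s q. lie_pow f j \<psi> s (fst q)",
      OF smooth_imp_differentiable_on_fst[OF smooth_lie_pow[OF assms(1) smooth_f]]]
  by simp

lemma lieG_gI_lie_pow_fI_neq_0:
  assumes "smooth (case_prod \<psi>)"
    and "\<And>j t p. j + 1 < n \<Longrightarrow> lieG g\<^sub>A (lie_pow f\<^sub>A j (\<lambda>s q. \<psi> s (fst q))) t p = 0"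
    and "1 \<le> n" and "\<beta> > 0"
    and "lieG g\<^sub>A (lie_pow f\<^sub>A (n - 1) (\<lambda>s q. \<psi> s (fst q))) t xA \<noteq> 0"
  shows "lieG gI (lie_pow (fI f\<^sub>A g\<^sub>A \<beta>) n (\<lambda>s q. \<psi> s (fst (fst q)))) t (xA, \<xi>) \<noteq> 0"
proof -
  have "lieG g\<^sub>A (\<lambda>s q. lie_pow f (n - 1) \<psi> s (fst q)) t xA \<noteq> 0"
    using assms(5) lie_pow_fA_on_fst[where n=n and j="n - 1", OF assms(1,2)] assms(3) by simp
  then obtain j where "lieG g\<^sub>A (\<lambda>s q. lie_pow f (n - 1) \<psi> s (fst q)) t xA $ j \<noteq> 0"
    by (auto simp: vec_eq_iff)
  then have "lieG gI (lie_pow (fI f\<^sub>A g\<^sub>A \<beta>) n (\<lambda>s q. \<psi> s (fst (fst q)))) t (xA, \<xi>) $ j \<noteq> 0"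
    using sigmoid_deriv_pos[OF assms(4), of "\<xi> $ j"] by (auto simp: lieG_gI_lie_pow_fI_nth[OF assms(1-3)])
  then show ?thesis
    by auto
qed

lemma lieG_gI_lie_pow_fI_nth_eq_0:
  assumes "smooth (case_prod \<psi>)"
    and "\<And>j t p. j + 1 < n \<Longrightarrow> lieG g\<^sub>A (lie_pow f\<^sub>A j (\<lambda>s q. \<psi> s (fst q))) t p = 0"
    and "1 \<le> n" and "zvec idx (snd (fst p)) $ i = 0"
  shows "lieG gI (lie_pow (fI f\<^sub>A g\<^sub>A \<beta>) n (\<lambda>s q. \<psi> s (fst (fst q)))) t p $ i = 0"
  using assms(4) by (simp add: lieG_gI_lie_pow_fI_nth[OF assms(1-3)] lieG_gA_on_fst_nth
      smooth_imp_differentiable_state[OF smooth_lie_pow[OF assms(1) smooth_f]])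

end

theorem corollary1:
  fixes f :: "real \<Rightarrow> real^'n \<Rightarrow> real^'n"
    and g :: "real \<Rightarrow> real^'n \<Rightarrow> real^'m^'n"
    and h :: "real \<Rightarrow> real^'n \<Rightarrow> real^'m"
    and \<phi> :: "real \<Rightarrow> real^'n \<Rightarrow> real^'m"
    and \<rho> :: "'m \<Rightarrow> nat"
    and idx :: "'z::finite \<Rightarrow> 'm \<times> nat"
    and \<sigma> :: "'m \<Rightarrow> nat"
    and \<beta> t0 :: real
    and xA0 :: "(real^'n) \<times> (real^'z)"
    and \<xi>0 :: "real^'m"
  defines "FA \<equiv> fA f g \<phi> \<rho> idx"
    and "GA \<equiv> gA f g \<phi> \<rho> idx"
    and "FI \<equiv> fI (fA f g \<phi> \<rho> idx) (gA f g \<phi> \<rho> idx) \<beta>"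
    and "hA \<equiv> (\<lambda>k t xA. h t (fst xA) $ k)"
    and "hI \<equiv> (\<lambda>k t xI. h t (fst (fst xI)) $ k)"
  assumes smooth_f: "smooth (\<lambda>p. f (fst p) (snd p))"
    and smooth_g: "smooth (\<lambda>p. g (fst p) (snd p))"
    and smooth_h: "smooth (\<lambda>p. h (fst p) (snd p))"
    and smooth_phi: "smooth (\<lambda>p. \<phi> (fst p) (snd p))"
    and rho_pos: "\<And>k. \<rho> k \<ge> 1"
    and reldeg_zero: "\<And>k i t x. i + 2 \<le> \<rho> k \<Longrightarrow>
           lieG (cols g) (lie_pow f i (\<lambda>s y. \<phi> s y $ k)) t x = 0"
    and reldeg_nz: "\<And>k t x. lieG (cols g) (lie_pow f (\<rho> k - 1) (\<lambda>s y. \<phi> s y $ k)) t x \<noteq> 0"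
    and Omega_inv: "\<And>t x. invertible (Omega_g f g \<phi> \<rho> t x)"
    and idx_bij: "bij_betw idx UNIV {(k, j). j < \<rho> k}"
    and beta_pos: "\<beta> > 0"
    and sigma_pos: "\<And>k. \<sigma> k \<ge> 1"
    and hA_zero: "\<And>k i t xA. 1 \<le> i \<Longrightarrow> i \<le> \<sigma> k - 1 \<Longrightarrow>
           lieG GA (lie_pow FA (i - 1) (hA k)) t xA = 0"
    and hA_nz: "\<And>k. lieG GA (lie_pow FA (\<sigma> k - 1) (hA k)) t0 xA0 \<noteq> 0"
  shows "(\<forall>k i t xI. 1 \<le> i \<and> i \<le> \<sigma> k \<longrightarrow> lieG gI (lie_pow FI (i - 1) (hI k)) t xI = 0)
       \<and> (\<forall>k. lieG gI (lie_pow FI (\<sigma> k) (hI k)) t0 (xA0, \<xi>0) \<noteq> 0)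
       \<and> (\<forall>t xI. (\<exists>i. zvec idx (snd (fst xI)) $ i = 0) \<longrightarrow>
            rank (\<chi> k. lieG gI (lie_pow FI (\<sigma> k) (hI k)) t xI) < CARD('m))"
proof -
  interpret augmented_system f g \<phi> \<rho> idx
    using smooth_f smooth_g smooth_phi Omega_inv by unfold_locales (simp_all add: case_prod_beta')
  have smooth_out: "smooth (case_prod (\<lambda>s x. h s x $ k))" for k
    using smooth_vec_nth[of h k] smooth_h by (simp add: case_prod_beta')
  have vanish: "lieG g\<^sub>A (lie_pow f\<^sub>A j (\<lambda>s q. h s (fst q) $ k)) t p = 0" if "j + 1 < \<sigma> k" for j k t p
    using hA_zero[of "j + 1" k] that by (simp add: GA_def FA_def hA_def)
  show ?thesis
  proof (intro conjI allI impI)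
    fix k i t p
    assume "1 \<le> i \<and> i \<le> \<sigma> k"
    then show "lieG gI (lie_pow FI (i - 1) (hI k)) t p = 0"
      unfolding FI_def hI_def by (intro lieG_gI_lie_pow_fI_eq_0[where n="\<sigma> k", OF smooth_out vanish]) auto
  next
    fix k
    show "lieG gI (lie_pow FI (\<sigma> k) (hI k)) t0 (xA0, \<xi>0) \<noteq> 0"
      using hA_nz[of k] unfolding FI_def hI_def FA_def GA_def hA_def
      by (intro lieG_gI_lie_pow_fI_neq_0[OF smooth_out vanish[of _ k] sigma_pos beta_pos])
  next
    fix t and p :: "((real^'n) \<times> (real^'z)) \<times> (real^'m)"
    assume "\<exists>i. zvec idx (snd (fst p)) $ i = 0"
    then obtain i where "zvec idx (snd (fst p)) $ i = 0"
      by blast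
    then have "lieG gI (lie_pow FI (\<sigma> k) (hI k)) t p $ i = 0" for k
      unfolding FI_def hI_def by (intro lieG_gI_lie_pow_fI_nth_eq_0[OF smooth_out vanish[of _ k] sigma_pos])
    then show "rank (\<chi> k. lieG gI (lie_pow FI (\<sigma> k) (hI k)) t p) < CARD('m)"
      by (intro rank_lt_card_if_zero_column[where i=i]) simp
  qed
qed

end
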